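(* Let $R_1$ and $R_2$ be rings, let $S$ be a subring of $R_2$, and let $F: R_1 \to 2^{R_2}$ be a powerful set-valued homomorphism such that $F(0_{R_1}) \subseteq S$, where $0_{R_1}$ is the zero element of $R_1$. Then the set $\underline{F}(S) = \{x \in R_1 : F(x) \subseteq S\}$ is a subring of $R_1$.
   Context: For a ring $R$, $2^{R}$ denotes the set of subsets of $R$. For $A, B \subseteq R$ write $A + B = \{a+b : a \in A, b \in B\}$, $AB = \{ab : a \in A, b \in B\}$ and $-A = \{-a : a \in A\}$. A powerful set-valued homomorphism from a ring $R_1$ to $2^{R_2}$ is a map $F: R_1 \to 2^{R_2}$ such that for all $x, y \in R_1$: $F(x+y) = F(x) + F(y)$, $F(xy) = F(x)F(y)$, and $F(-x) = -F(x)$. A subring means a nonempty subset closed under addition, multiplication and additive inverses. *)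

theory Defs
  imports Main
begin

definition set_add :: "'a::ring set \<Rightarrow> 'a set \<Rightarrow> 'a set" where
  "set_add A B = {a + b | a b. a \<in> A \<and> b \<in> B}"

definition set_mul :: "'a::ring set \<Rightarrow> 'a set \<Rightarrow> 'a set" where
  "set_mul A B = {a * b | a b. a \<in> A \<and> b \<in> B}"

definition set_neg :: "'a::ring set \<Rightarrow> 'a set" where
  "set_neg A = {- a | a. a \<in> A}"

definition powerful_set_hom :: "('a::ring \<Rightarrow> 'b::ring set) \<Rightarrow> bool" where
  "powerful_set_hom F \<longleftrightarrow>
     (\<forall>x y. F (x + y) = set_add (F x) (F y) \<and> F (x * y) = set_mul (F x) (F y)
            \<and> F (- x) = set_neg (F x))"

definition is_subring :: "'a::ring set \<Rightarrow> bool" where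
  "is_subring S \<longleftrightarrow> S \<noteq> {} \<and>
     (\<forall>a\<in>S. \<forall>b\<in>S. a + b \<in> S \<and> a * b \<in> S) \<and> (\<forall>a\<in>S. - a \<in> S)"

definition lower_approx :: "('a::ring \<Rightarrow> 'b::ring set) \<Rightarrow> 'b set \<Rightarrow> 'a set" where
  "lower_approx F S = {x. F x \<subseteq> S}"

end

theory Submission
  imports Defs
begin

text \<open>Since \<open>F\<close> turns ring operations into the pointwise operations on sets, \<open>F (x + y)\<close>,
  \<open>F (x * y)\<close> and \<open>F (- x)\<close> lie in \<open>S + S\<close>, \<open>S S\<close> and \<open>- S\<close> whenever \<open>F x, F y \<subseteq> S\<close>, and
  these are contained in \<open>S\<close>. The hypothesis \<open>F 0 \<subseteq> S\<close> only provides nonemptiness.\<close>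

lemma powerful_set_homD:
  assumes "powerful_set_hom F"
  shows "F (x + y) = set_add (F x) (F y)"
    and "F (x * y) = set_mul (F x) (F y)"
    and "F (- x) = set_neg (F x)"
  using assms unfolding powerful_set_hom_def by auto

lemma is_subringD:
  assumes "is_subring S" and "a \<in> S" and "b \<in> S"
  shows "a + b \<in> S" and "a * b \<in> S" and "- a \<in> S"
  using assms unfolding is_subring_def by auto

lemma set_add_subset_subring:
  assumes "is_subring S" and "A \<subseteq> S" and "B \<subseteq> S"
  shows "set_add A B \<subseteq> S"
  using assms is_subringD(1) unfolding set_add_def by blast

lemma set_mul_subset_subring:
  assumes "is_subring S" and "A \<subseteq> S" and "B \<subseteq> S"
  shows "set_mul A B \<subseteq> S"
  using assms is_subringD(2) unfolding set_mul_def by blast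

lemma set_neg_subset_subring:
  assumes "is_subring S" and "A \<subseteq> S"
  shows "set_neg A \<subseteq> S"
  using assms is_subringD(3) unfolding set_neg_def by blast

context
  fixes F :: "'a::ring \<Rightarrow> 'b::ring set" and S :: "'b set"
  assumes hom: "powerful_set_hom F" and subring: "is_subring S"
begin

lemma lower_approx_add_closed:
  "x \<in> lower_approx F S \<Longrightarrow> y \<in> lower_approx F S \<Longrightarrow> x + y \<in> lower_approx F S"
  unfolding lower_approx_def
  by (simp add: powerful_set_homD(1)[OF hom] set_add_subset_subring[OF subring])

lemma lower_approx_mult_closed:
  "x \<in> lower_approx F S \<Longrightarrow> y \<in> lower_approx F S \<Longrightarrow> x * y \<in> lower_approx F S"
  unfolding lower_approx_def
  by (simp add: powerful_set_homD(2)[OF hom] set_mul_subset_subring[OF subring])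

lemma lower_approx_uminus_closed:
  "x \<in> lower_approx F S \<Longrightarrow> - x \<in> lower_approx F S"
  unfolding lower_approx_def
  by (simp add: powerful_set_homD(3)[OF hom] set_neg_subset_subring[OF subring])

end

theorem theorem4p1:
  fixes F :: "'a::ring \<Rightarrow> 'b::ring set" and S :: "'b set"
  assumes "is_subring S"
    and "powerful_set_hom F"
    and "F 0 \<subseteq> S"
  shows "is_subring (lower_approx F S)"
proof -
  have "0 \<in> lower_approx F S"
    using assms(3) unfolding lower_approx_def by simp
  then show ?thesis
    unfolding is_subring_def
    using lower_approx_add_closed lower_approx_mult_closed lower_approx_uminus_closed
      assms(1,2) by blast
qed

end
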